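(* Fix a nonempty $A\subseteq S$ and $w\in A$, and let $E_0=\{\tau_{\mathcal E_N^w}=\tau_{\mathcal E_N(A)}\}$. Let $x,y\in S$ be distinct with $r(x,y)>r(y,x)>0$, and let $q_{x,y}=r(y,x)/r(x,y)$. Then, as $N\to\infty$, $$\Big|\mathbb P_{\zeta_1^{x,y}}[E_0]-\frac{q_{x,y}-q_{x,y}^N}{1-q_{x,y}^N}\mathbb P_{\xi_N^x}[E_0]-\frac{1-q_{x,y}}{1-q_{x,y}^N}\mathbb P_{\xi_N^y}[E_0]\Big|=O(d_N\log N)$$ and $$\Big|\mathbb P_{\zeta_{N-1}^{x,y}}[E_0]-\frac{q_{x,y}^{N-1}-q_{x,y}^N}{1-q_{x,y}^N}\mathbb P_{\xi_N^x}[E_0]-\frac{1-q_{x,y}^{N-1}}{1-q_{x,y}^N}\mathbb P_{\xi_N^y}[E_0]\Big|=O(d_N\log N).$$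
   Context: $S$ is finite; $r:S\times S\to[0,\infty)$, $r(x,x)=0$, are the rates of an irreducible continuous-time Markov chain on $S$. $\mathcal H_N=\{\eta\in\{0,1,2,\dots\}^S:\sum_x\eta_x=N\}$; $\sigma^{x,y}\eta$ moves one particle from $x$ to $y$ (if $\eta_x\ge1$; else $\sigma^{x,y}\eta=\eta$). With $d_N>0$, $d_N\to0$, the inclusion process is the Markov chain on $\mathcal H_N$ with generator $(\mathcal L_NF)(\eta)=\sum_{x\ne y}\eta_x(d_N+\eta_y)r(x,y)\{F(\sigma^{x,y}\eta)-F(\eta)\}$; $\mathbb P_\eta$ its law from $\eta$; $\tau_{\mathcal C}$ the hitting time of $\mathcal C\subseteq\mathcal H_N$. $\xi_N^z$: all $N$ particles at $z$; $\mathcal E_N^z=\{\xi_N^z\}$, $\mathcal E_N(A)=\bigcup_{z\in A}\mathcal E_N^z$. For $0\le i\le N$, $\zeta_i^{x,y}$ is the configuration with $N-i$ particles at $x$, $i$ at $y$, none elsewhere (so $\zeta_0^{x,y}=\xi_N^x$, $\zeta_N^{x,y}=\xi_N^y$). $O(\cdot)$ has constant independent of $N$. *)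

theory Defs
  imports "HOL-Analysis.Analysis" "HOL-Library.Landau_Symbols"
begin

text \<open>Configurations: functions S \<Rightarrow> nat, with S a finite type. The number of
particles of a configuration is its total mass.\<close>

definition conc :: "nat \<Rightarrow> 'a \<Rightarrow> ('a \<Rightarrow> nat)" where
  "conc N z = (\<lambda>u. if u = z then N else 0)"

definition zeta :: "nat \<Rightarrow> 'a \<Rightarrow> 'a \<Rightarrow> nat \<Rightarrow> ('a \<Rightarrow> nat)" where
  "zeta N x y i = (\<lambda>u. if u = x then N - i else if u = y then i else 0)"

definition move :: "'a \<Rightarrow> 'a \<Rightarrow> ('a \<Rightarrow> nat) \<Rightarrow> ('a \<Rightarrow> nat)" where
  "move x y \<eta> = (if 1 \<le> \<eta> x then \<eta>(x := \<eta> x - 1, y := \<eta> y + 1) else \<eta>)"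

definition incl_rate :: "real \<Rightarrow> ('a \<Rightarrow> 'a \<Rightarrow> real) \<Rightarrow> ('a \<Rightarrow> nat) \<Rightarrow> 'a \<Rightarrow> 'a \<Rightarrow> real" where
  "incl_rate dN r \<eta> x y = real (\<eta> x) * (dN + real (\<eta> y)) * r x y"

definition incl_total :: "real \<Rightarrow> ('a::finite \<Rightarrow> 'a \<Rightarrow> real) \<Rightarrow> ('a \<Rightarrow> nat) \<Rightarrow> real" where
  "incl_total dN r \<eta> = (\<Sum>x\<in>UNIV. \<Sum>y\<in>UNIV - {x}. incl_rate dN r \<eta> x y)"

definition in_EA :: "'a set \<Rightarrow> ('a::finite \<Rightarrow> nat) \<Rightarrow> bool" where
  "in_EA A \<eta> \<longleftrightarrow> (\<exists>z\<in>A. \<eta> = conc (sum \<eta> UNIV) z)"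

text \<open>hit_steps dN r A w n eta: probability, for the inclusion process (with
parameter dN) started from eta, that the set E(A) is hit within at most n jumps
and that it is hit first at the configuration xi^w. (Hitting events of a
continuous-time chain depend only on its embedded jump chain.)\<close>
fun hit_steps :: "real \<Rightarrow> ('a::finite \<Rightarrow> 'a \<Rightarrow> real) \<Rightarrow> 'a set \<Rightarrow> 'a \<Rightarrow> nat \<Rightarrow> ('a \<Rightarrow> nat) \<Rightarrow> real" where
  "hit_steps dN r A w 0 \<eta> = (if \<eta> = conc (sum \<eta> UNIV) w then 1 else 0)"
| "hit_steps dN r A w (Suc n) \<eta> =
     (if in_EA A \<eta> then (if \<eta> = conc (sum \<eta> UNIV) w then 1 else 0)
      else (\<Sum>x\<in>UNIV. \<Sum>y\<in>UNIV - {x}.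
               incl_rate dN r \<eta> x y * hit_steps dN r A w n (move x y \<eta>)) / incl_total dN r \<eta>)"

text \<open>P_eta[ tau_{E^w} = tau_{E(A)} ], as the limit of the increasing sequence above.\<close>
definition hit_prob :: "real \<Rightarrow> ('a::finite \<Rightarrow> 'a \<Rightarrow> real) \<Rightarrow> 'a set \<Rightarrow> 'a \<Rightarrow> ('a \<Rightarrow> nat) \<Rightarrow> real" where
  "hit_prob dN r A w \<eta> = lim (\<lambda>n. hit_steps dN r A w n \<eta>)"

end

theory Submission
  imports Defs
begin

(*
  Let h j be the hitting probability started from zeta N x y j. Harmonicity of h at
  zeta N x y j (0 < j < N), with all jumps off the edge {x, y} lumped together (their total
  rate is O(N d)), gives
    (N - j) (d + j) r x y (h (j + 1) - h j) - j (d + N - j) r y x (h j - h (j - 1)) = O(N d).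
  Up to errors O(d N / (j (N - j))) the increments of h thus follow those of the walk on
  {0..N} with rate ratio q = r y x / r x y, whose harmonic profile is the interpolation in
  the claim. The deviation from that profile vanishes at 0 and N, and its increments obey a
  recurrence with contraction factor at most q (1 + d) < 1; hence its first and last
  increments are bounded by the accumulated error, of order
  d * sum (N / (j (N - j))) = 2 d H (N - 1) = O(d log N).
*)

lemma sum_off_diagonal:
  fixes F :: "'a::finite \<Rightarrow> 'a \<Rightarrow> 'b::comm_monoid_add"
  shows "(\<Sum>x\<in>UNIV. \<Sum>y\<in>UNIV - {x}. F x y) = (\<Sum>(x, y)\<in>{(u, v). u \<noteq> v}. F x y)"
proof -
  have "(SIGMA x:UNIV. UNIV - {x}) = {(u, v). u \<noteq> (v::'a)}" by auto
  then show ?thesis by (simp add: sum.Sigma)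
qed

locale inclusion_hitting =
  fixes dN :: real and r :: "'a::finite \<Rightarrow> 'a \<Rightarrow> real" and A :: "'a set" and w :: 'a
  assumes dN_pos: "0 < dN" and r_nonneg: "\<And>a b. 0 \<le> r a b" and w_in_A: "w \<in> A"
begin

lemma incl_rate_nonneg: "0 \<le> incl_rate dN r \<eta> a b"
  unfolding incl_rate_def using dN_pos r_nonneg by simp

lemma incl_total_nonneg: "0 \<le> incl_total dN r \<eta>"
  unfolding incl_total_def by (intro sum_nonneg incl_rate_nonneg)

lemma hit_steps_bounds: "0 \<le> hit_steps dN r A w n \<eta> \<and> hit_steps dN r A w n \<eta> \<le> 1"
proof (induction n arbitrary: \<eta>)
  case (Suc n)
  let ?S = "\<Sum>x\<in>UNIV. \<Sum>y\<in>UNIV - {x}. incl_rate dN r \<eta> x y * hit_steps dN r A w n (move x y \<eta>)"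
  have "0 \<le> ?S"
    using Suc.IH incl_rate_nonneg by (intro sum_nonneg) simp
  moreover have "?S \<le> incl_total dN r \<eta>"
    unfolding incl_total_def using Suc.IH incl_rate_nonneg
    by (intro sum_mono) (simp add: mult_left_le)
  ultimately show ?case
    by (cases "incl_total dN r \<eta> = 0") auto
qed simp

lemma hit_steps_Suc_mono: "hit_steps dN r A w n \<eta> \<le> hit_steps dN r A w (Suc n) \<eta>"
proof (induction n arbitrary: \<eta>)
  case 0
  show ?case
  proof (cases "in_EA A \<eta>")
    case False
    then have "\<eta> \<noteq> conc (sum \<eta> UNIV) w"
      using w_in_A unfolding in_EA_def by auto
    then show ?thesis
      using hit_steps_bounds[of "Suc 0" \<eta>] by (simp only: hit_steps.simps(1) if_False)
  qed simp
next
  case (Suc n)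
  show ?case
  proof (cases "in_EA A \<eta>")
    case False
    have "(\<Sum>x\<in>UNIV. \<Sum>y\<in>UNIV - {x}. incl_rate dN r \<eta> x y * hit_steps dN r A w n (move x y \<eta>))
       \<le> (\<Sum>x\<in>UNIV. \<Sum>y\<in>UNIV - {x}. incl_rate dN r \<eta> x y * hit_steps dN r A w (Suc n) (move x y \<eta>))"
      by (intro sum_mono mult_left_mono Suc.IH incl_rate_nonneg)
    then show ?thesis
      unfolding hit_steps.simps(2) if_not_P[OF False] by (rule divide_right_mono[OF _ incl_total_nonneg])
  qed simp
qed

lemma hit_steps_tendsto: "(\<lambda>n. hit_steps dN r A w n \<eta>) \<longlonglongrightarrow> hit_prob dN r A w \<eta>"
proof -
  have "incseq (\<lambda>n. hit_steps dN r A w n \<eta>)"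
    using hit_steps_Suc_mono by (simp add: incseq_Suc_iff)
  moreover have "\<forall>n. hit_steps dN r A w n \<eta> \<le> 1"
    using hit_steps_bounds by blast
  ultimately obtain L where "(\<lambda>n. hit_steps dN r A w n \<eta>) \<longlonglongrightarrow> L"
    by (rule incseq_convergent)
  then show ?thesis
    unfolding hit_prob_def by (simp add: limI)
qed

lemma hit_prob_bounds: "0 \<le> hit_prob dN r A w \<eta> \<and> hit_prob dN r A w \<eta> \<le> 1"
proof
  show "0 \<le> hit_prob dN r A w \<eta>"
    by (rule LIMSEQ_le_const[OF hit_steps_tendsto]) (use hit_steps_bounds in blast)
  show "hit_prob dN r A w \<eta> \<le> 1"
    by (rule LIMSEQ_le_const2[OF hit_steps_tendsto]) (use hit_steps_bounds in blast)
qed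

lemma hit_prob_harmonic:
  assumes "\<not> in_EA A \<eta>"
  shows "hit_prob dN r A w \<eta> = (\<Sum>x\<in>UNIV. \<Sum>y\<in>UNIV - {x}.
           incl_rate dN r \<eta> x y * hit_prob dN r A w (move x y \<eta>)) / incl_total dN r \<eta>"
proof -
  have "(\<lambda>n. hit_steps dN r A w (Suc n) \<eta>) \<longlonglongrightarrow> (\<Sum>x\<in>UNIV. \<Sum>y\<in>UNIV - {x}.
           incl_rate dN r \<eta> x y * hit_prob dN r A w (move x y \<eta>)) / incl_total dN r \<eta>"
    unfolding hit_steps.simps(2) if_not_P[OF assms] divide_inverse
    by (intro tendsto_mult_right tendsto_sum tendsto_mult_left hit_steps_tendsto)
  then show ?thesis
    using LIMSEQ_Suc[OF hit_steps_tendsto] LIMSEQ_unique by blast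
qed

lemma hit_prob_balance:
  assumes "\<not> in_EA A \<eta>"
  shows "(\<Sum>x\<in>UNIV. \<Sum>y\<in>UNIV - {x}. incl_rate dN r \<eta> x y *
           (hit_prob dN r A w (move x y \<eta>) - hit_prob dN r A w \<eta>)) = 0"
proof -
  let ?h = "hit_prob dN r A w"
  define S where "S = (\<Sum>x\<in>UNIV. \<Sum>y\<in>UNIV - {x}. incl_rate dN r \<eta> x y * ?h (move x y \<eta>))"
  define T where "T = incl_total dN r \<eta>"
  have "0 \<le> S" "S \<le> T"
    unfolding S_def T_def incl_total_def using hit_prob_bounds incl_rate_nonneg
    by (auto intro!: sum_nonneg sum_mono simp: mult_left_le)
  moreover have "?h \<eta> = S / T"
    unfolding S_def T_def by (rule hit_prob_harmonic[OF assms])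
  ultimately have "S - ?h \<eta> * T = 0"
    by (cases "T = 0") auto
  then show ?thesis
    unfolding S_def T_def incl_total_def
    by (simp add: right_diff_distrib sum_subtractf sum_distrib_left mult.commute)
qed

text \<open>By harmonicity the drift through the jumps in \<open>B\<close> is minus the drift through the
  other jumps, each of which moves the hitting probability by at most 1.\<close>
lemma hit_prob_partial_balance:
  assumes "\<not> in_EA A \<eta>" and "B \<subseteq> {(u, v). u \<noteq> v}"
  shows "\<bar>\<Sum>(u, v)\<in>B. incl_rate dN r \<eta> u v * (hit_prob dN r A w (move u v \<eta>) - hit_prob dN r A w \<eta>)\<bar>
         \<le> (\<Sum>(u, v)\<in>{(u, v). u \<noteq> v} - B. incl_rate dN r \<eta> u v)"
proof -
  define f where "f u v = incl_rate dN r \<eta> u v * (hit_prob dN r A w (move u v \<eta>) - hit_prob dN r A w \<eta>)"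
    for u v
  have "(\<Sum>(u, v)\<in>{(u, v). u \<noteq> v}. f u v) = 0"
    using hit_prob_balance[OF assms(1)] unfolding sum_off_diagonal f_def .
  then have "(\<Sum>(u, v)\<in>B. f u v) = - (\<Sum>(u, v)\<in>{(u, v). u \<noteq> v} - B. f u v)"
    using sum.subset_diff[OF assms(2), of "\<lambda>(u, v). f u v"] by simp
  moreover have bound: "\<bar>f u v\<bar> \<le> incl_rate dN r \<eta> u v" for u v
  proof -
    have "\<bar>hit_prob dN r A w (move u v \<eta>) - hit_prob dN r A w \<eta>\<bar> \<le> 1"
      using hit_prob_bounds[of "move u v \<eta>"] hit_prob_bounds[of \<eta>] by linarith
    then show ?thesis
      unfolding f_def using incl_rate_nonneg by (simp add: abs_mult mult_left_le)
  qed
  moreover have "\<bar>\<Sum>(u, v)\<in>{(u, v). u \<noteq> v} - B. f u v\<bar>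
      \<le> (\<Sum>(u, v)\<in>{(u, v). u \<noteq> v} - B. incl_rate dN r \<eta> u v)"
    by (intro order_trans[OF sum_abs sum_mono]) (use bound in \<open>auto simp: split_def\<close>)
  ultimately show ?thesis
    unfolding f_def[symmetric] by simp
qed

end

lemma zeta_not_in_EA:
  assumes "x \<noteq> y" and "1 \<le> i" "i < N"
  shows "\<not> in_EA A (zeta N x y i)"
proof
  assume "in_EA A (zeta N x y i)"
  then obtain z where z: "zeta N x y i = conc (sum (zeta N x y i) UNIV) z"
    unfolding in_EA_def by blast
  have "zeta N x y i x \<noteq> 0" "zeta N x y i y \<noteq> 0"
    using assms unfolding zeta_def by auto
  then have "x = z" "y = z"
    using z unfolding conc_def by metis+
  with \<open>x \<noteq> y\<close> show False by simp
qed

lemma zeta_0: "zeta N x y 0 = conc N x"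
  unfolding zeta_def conc_def by auto

lemma zeta_self: "x \<noteq> y \<Longrightarrow> zeta N x y N = conc N y"
  unfolding zeta_def conc_def by auto

lemma move_zeta_forward: "x \<noteq> y \<Longrightarrow> i < N \<Longrightarrow> move x y (zeta N x y i) = zeta N x y (Suc i)"
  unfolding move_def zeta_def by (auto simp: fun_eq_iff)

lemma move_zeta_backward: "x \<noteq> y \<Longrightarrow> 1 \<le> i \<Longrightarrow> i \<le> N \<Longrightarrow> move y x (zeta N x y i) = zeta N x y (i - 1)"
  unfolding move_def zeta_def by (auto simp: fun_eq_iff)

text \<open>Away from the edge, a jump starts at an empty site or lands on one, so only the
  term \<open>d\<close> of the inclusion rate survives.\<close>
lemma incl_rate_zeta_off_edge_le:
  assumes "0 \<le> d" "0 \<le> r u v" "u \<noteq> v" "(u, v) \<notin> {(x, y), (y, x)}" "i \<le> N"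
  shows "incl_rate d r (zeta N x y i) u v \<le> real N * d * r u v"
proof (cases "zeta N x y i u = 0")
  case False
  then have "zeta N x y i v = 0" "zeta N x y i u \<le> N"
    using assms(3-5) unfolding zeta_def by (auto split: if_splits)
  then show ?thesis
    unfolding incl_rate_def using assms(1,2) by (simp add: mult_right_mono)
qed (simp add: incl_rate_def assms)

context inclusion_hitting
begin

lemma hit_prob_zeta_edge_balance:
  assumes "x \<noteq> y" and "1 \<le> i" "i < N"
  shows "\<bar>real (N - i) * (dN + real i) * r x y *
            (hit_prob dN r A w (zeta N x y (Suc i)) - hit_prob dN r A w (zeta N x y i))
          - real i * (dN + real (N - i)) * r y x *
            (hit_prob dN r A w (zeta N x y i) - hit_prob dN r A w (zeta N x y (i - 1)))\<bar>
         \<le> real N * dN * (\<Sum>u\<in>UNIV. \<Sum>v\<in>UNIV. r u v)"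
proof -
  let ?h = "hit_prob dN r A w"
  define \<eta> where "\<eta> = zeta N x y i"
  define Off where "Off = {(u, v). u \<noteq> (v::'a)}"
  define B where "B = {(x, y), (y, x)}"
  have "B \<subseteq> Off"
    unfolding B_def Off_def using assms(1) by auto
  then have "\<bar>\<Sum>(u, v)\<in>B. incl_rate dN r \<eta> u v * (?h (move u v \<eta>) - ?h \<eta>)\<bar>
      \<le> (\<Sum>(u, v)\<in>Off - B. incl_rate dN r \<eta> u v)"
    unfolding Off_def \<eta>_def by (intro hit_prob_partial_balance zeta_not_in_EA assms)
  also have "\<dots> \<le> (\<Sum>(u, v)\<in>Off - B. real N * dN * r u v)"
    unfolding \<eta>_def using assms(3) dN_pos r_nonneg
    by (intro sum_mono) (auto intro!: incl_rate_zeta_off_edge_le simp: Off_def B_def)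
  also have "\<dots> \<le> (\<Sum>(u, v)\<in>UNIV. real N * dN * r u v)"
    using dN_pos r_nonneg by (intro sum_mono2) auto
  also have "\<dots> = real N * dN * (\<Sum>u\<in>UNIV. \<Sum>v\<in>UNIV. r u v)"
    by (simp add: sum_distrib_left sum.cartesian_product UNIV_Times_UNIV[symmetric] split_def
        del: UNIV_Times_UNIV)
  finally have "\<bar>\<Sum>(u, v)\<in>B. incl_rate dN r \<eta> u v * (?h (move u v \<eta>) - ?h \<eta>)\<bar>
      \<le> real N * dN * (\<Sum>u\<in>UNIV. \<Sum>v\<in>UNIV. r u v)" .
  moreover have "incl_rate dN r \<eta> x y = real (N - i) * (dN + real i) * r x y"
    "incl_rate dN r \<eta> y x = real i * (dN + real (N - i)) * r y x"
    unfolding \<eta>_def incl_rate_def zeta_def using assms(1) by (simp_all add: mult.commute)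
  moreover have "move x y \<eta> = zeta N x y (Suc i)" "move y x \<eta> = zeta N x y (i - 1)"
    unfolding \<eta>_def using assms by (simp_all add: move_zeta_forward move_zeta_backward)
  ultimately show ?thesis
    using assms(1) unfolding B_def \<eta>_def by (simp add: algebra_simps)
qed

lemma hit_prob_zeta_gradient_recurrence:
  assumes "x \<noteq> y" "0 < r x y" "1 \<le> i" "i < N"
  defines "h \<equiv> \<lambda>j. hit_prob dN r A w (zeta N x y j)"
  shows "\<bar>real (N - i) * (dN + real i) * (h (Suc i) - h i)
           - r y x / r x y * real i * (dN + real (N - i)) * (h i - h (i - 1))\<bar>
         \<le> (\<Sum>u\<in>UNIV. \<Sum>v\<in>UNIV. r u v) / r x y * real N * dN"
proof -
  let ?E = "real (N - i) * (dN + real i) * (h (Suc i) - h i)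
      - r y x / r x y * real i * (dN + real (N - i)) * (h i - h (i - 1))"
  have "real (N - i) * (dN + real i) * r x y * (h (Suc i) - h i)
      - real i * (dN + real (N - i)) * r y x * (h i - h (i - 1)) = r x y * ?E"
    using \<open>0 < r x y\<close> by (simp add: field_simps)
  then have "r x y * \<bar>?E\<bar> \<le> real N * dN * (\<Sum>u\<in>UNIV. \<Sum>v\<in>UNIV. r u v)"
    using hit_prob_zeta_edge_balance[OF assms(1,3,4)] \<open>0 < r x y\<close>
    unfolding h_def by (simp add: abs_mult)
  then show ?thesis
    using \<open>0 < r x y\<close> by (simp add: field_simps)
qed

end

text \<open>The harmonic function, with boundary values \<open>a\<close> at 0 and \<open>b\<close> at \<open>N\<close>, of the
  random walk on \<open>{0..N}\<close> that steps up and down with rates in the ratio \<open>1 : q\<close>.\<close>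
definition walk_harmonic :: "real \<Rightarrow> nat \<Rightarrow> real \<Rightarrow> real \<Rightarrow> nat \<Rightarrow> real" where
  "walk_harmonic q N a b j = (q ^ j - q ^ N) / (1 - q ^ N) * a + (1 - q ^ j) / (1 - q ^ N) * b"

lemma walk_harmonic_eq:
  assumes "q ^ N \<noteq> 1"
  shows "walk_harmonic q N a b j = a + (1 - q ^ j) / (1 - q ^ N) * (b - a)"
proof -
  define c where "c = (1 - q ^ j) / (1 - q ^ N)"
  have coefficient: "(q ^ j - q ^ N) / (1 - q ^ N) = 1 - c"
    unfolding c_def using assms by (simp add: field_simps)
  show ?thesis
    unfolding walk_harmonic_def c_def[symmetric] coefficient by (simp add: algebra_simps)
qed

lemma walk_harmonic_gradient:
  assumes "q ^ N \<noteq> 1"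
  shows "walk_harmonic q N a b (Suc k) - walk_harmonic q N a b k = (1 - q) * q ^ k / (1 - q ^ N) * (b - a)"
proof -
  define c where "c i = (1 - q ^ i) / (1 - q ^ N)" for i
  have "c (Suc k) - c k = (1 - q) * q ^ k / (1 - q ^ N)"
    unfolding c_def by (simp add: diff_divide_distrib[symmetric] algebra_simps)
  moreover have "walk_harmonic q N a b i = a + c i * (b - a)" for i
    unfolding c_def by (rule walk_harmonic_eq[OF assms])
  ultimately show ?thesis
    by (simp add: left_diff_distrib[symmetric])
qed

lemma walk_harmonic_gradient_abs_le:
  assumes "0 \<le> q" "q < 1" "k < N" "\<bar>b - a\<bar> \<le> 1"
  shows "\<bar>walk_harmonic q N a b (Suc k) - walk_harmonic q N a b k\<bar> \<le> 1"
proof -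
  have "q ^ N < 1"
    using assms by (simp add: power_less_one_iff)
  have "(1 - q) * q ^ k \<le> (1 - q) * (\<Sum>i<N. q ^ i)"
    using assms by (intro mult_left_mono member_le_sum) auto
  also have "\<dots> = 1 - q ^ N"
    by (simp add: one_diff_power_eq)
  finally have "\<bar>(1 - q) * q ^ k / (1 - q ^ N)\<bar> \<le> 1"
    using assms \<open>q ^ N < 1\<close> by simp
  then show ?thesis
    unfolding walk_harmonic_gradient[OF less_imp_neq[OF \<open>q ^ N < 1\<close>]] abs_mult
    using assms(4) by (intro mult_le_one) auto
qed

text \<open>The negative parts of \<open>\<delta>\<close> satisfy a contracting recurrence, and by the vanishing
  sum they carry all the mass of \<open>\<delta> 0\<close>.\<close>
lemma contracting_recurrence_zero_sum_head_le:
  fixes \<delta> \<rho> \<eta> :: "nat \<Rightarrow> real"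
  assumes "q < 1"
    and \<rho>: "\<And>k. k < M \<Longrightarrow> 0 \<le> \<rho> k \<and> \<rho> k \<le> q"
    and \<eta>: "\<And>k. k < M \<Longrightarrow> 0 \<le> \<eta> k"
    and step: "\<And>k. k < M \<Longrightarrow> \<rho> k * \<delta> k - \<eta> k \<le> \<delta> (Suc k)"
    and sum_zero: "(\<Sum>k\<le>M. \<delta> k) = 0" and "0 \<le> \<delta> 0"
  shows "\<delta> 0 \<le> (\<Sum>k<M. \<eta> k) / (1 - q)"
proof (cases "M = 0")
  case False
  then have "0 \<le> q" using \<rho>[of 0] by linarith
  define n where "n k = max 0 (- \<delta> k)" for k
  have n_step: "n (Suc k) \<le> q * n k + \<eta> k" if "k < M" for k
  proof -
    have "\<rho> k * \<delta> k \<ge> - q * n k"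
      using \<rho>[OF that] \<open>0 \<le> q\<close> unfolding n_def
      by (cases "0 \<le> \<delta> k") (auto simp: mult_right_mono_neg mult_nonneg_nonneg)
    then show ?thesis
      unfolding n_def using step[OF that] \<eta>[OF that] \<open>0 \<le> q\<close> by (simp add: mult_nonneg_nonneg)
  qed
  define T where "T = (\<Sum>k<M. n (Suc k))"
  have "(\<Sum>k<M. n k) \<le> (\<Sum>k<Suc M. n k)"
    by (simp add: n_def)
  also have "\<dots> = T"
    unfolding T_def sum.lessThan_Suc_shift using \<open>0 \<le> \<delta> 0\<close> by (simp add: n_def)
  finally have "(\<Sum>k<M. n k) \<le> T" .
  have "T \<le> (\<Sum>k<M. q * n k + \<eta> k)"
    unfolding T_def using n_step by (intro sum_mono) auto
  also have "\<dots> \<le> q * T + (\<Sum>k<M. \<eta> k)"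
    using \<open>(\<Sum>k<M. n k) \<le> T\<close> \<open>0 \<le> q\<close>
    by (simp add: sum.distrib sum_distrib_left[symmetric] mult_left_mono)
  finally have "T \<le> (\<Sum>k<M. \<eta> k) / (1 - q)"
    using \<open>q < 1\<close> by (simp add: field_simps)
  moreover have "\<delta> 0 \<le> T"
  proof -
    have "\<delta> 0 = - (\<Sum>k<M. \<delta> (Suc k))"
      using sum_zero unfolding sum.atMost_shift by linarith
    also have "\<dots> \<le> T"
      unfolding T_def n_def by (simp add: sum_negf[symmetric] sum_mono)
    finally show ?thesis .
  qed
  ultimately show ?thesis by linarith
qed (use sum_zero in simp)

lemma contracting_recurrence_zero_sum_head_abs_le:
  fixes \<delta> \<rho> \<eta> :: "nat \<Rightarrow> real"
  assumes "q < 1"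
    and \<rho>: "\<And>k. k < M \<Longrightarrow> 0 \<le> \<rho> k \<and> \<rho> k \<le> q"
    and \<eta>: "\<And>k. k < M \<Longrightarrow> 0 \<le> \<eta> k"
    and step: "\<And>k. k < M \<Longrightarrow> \<bar>\<delta> (Suc k) - \<rho> k * \<delta> k\<bar> \<le> \<eta> k"
    and sum_zero: "(\<Sum>k\<le>M. \<delta> k) = 0"
  shows "\<bar>\<delta> 0\<bar> \<le> (\<Sum>k<M. \<eta> k) / (1 - q)"
proof (cases "0 \<le> \<delta> 0")
  case True
  have "\<rho> k * \<delta> k - \<eta> k \<le> \<delta> (Suc k)" if "k < M" for k
    using step[OF that] by (simp add: abs_le_iff)
  with True have "\<delta> 0 \<le> (\<Sum>k<M. \<eta> k) / (1 - q)"
    by (intro contracting_recurrence_zero_sum_head_le[OF \<open>q < 1\<close> \<rho> \<eta> _ sum_zero])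
  with True show ?thesis by simp
next
  case False
  have "\<rho> k * - \<delta> k - \<eta> k \<le> - \<delta> (Suc k)" if "k < M" for k
    using step[OF that] by (simp add: abs_le_iff)
  moreover have "(\<Sum>k\<le>M. - \<delta> k) = 0"
    using sum_zero by (simp add: sum_negf)
  ultimately have "- \<delta> 0 \<le> (\<Sum>k<M. \<eta> k) / (1 - q)"
    using False by (intro contracting_recurrence_zero_sum_head_le[OF \<open>q < 1\<close> \<rho> \<eta>]) auto
  with False show ?thesis by simp
qed

lemma contracting_recurrence_abs_le:
  fixes \<delta> \<rho> \<eta> :: "nat \<Rightarrow> real"
  assumes \<rho>: "\<And>k. k < M \<Longrightarrow> 0 \<le> \<rho> k \<and> \<rho> k \<le> 1"
    and step: "\<And>k. k < M \<Longrightarrow> \<bar>\<delta> (Suc k) - \<rho> k * \<delta> k\<bar> \<le> \<eta> k"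
    and "n \<le> M"
  shows "\<bar>\<delta> n\<bar> \<le> \<bar>\<delta> 0\<bar> + (\<Sum>k<n. \<eta> k)"
  using \<open>n \<le> M\<close>
proof (induction n)
  case (Suc n)
  have "\<bar>\<rho> n * \<delta> n\<bar> \<le> \<bar>\<delta> n\<bar>"
    using \<rho>[of n] Suc.prems by (simp add: abs_mult mult_left_le_one_le)
  then show ?case
    using Suc step[of n] by simp
qed simp

lemma contracting_recurrence_zero_sum_ends_le:
  fixes \<delta> \<rho> \<eta> :: "nat \<Rightarrow> real"
  assumes "q < 1"
    and \<rho>: "\<And>k. k < M \<Longrightarrow> 0 \<le> \<rho> k \<and> \<rho> k \<le> q"
    and \<eta>: "\<And>k. k < M \<Longrightarrow> 0 \<le> \<eta> k"
    and step: "\<And>k. k < M \<Longrightarrow> \<bar>\<delta> (Suc k) - \<rho> k * \<delta> k\<bar> \<le> \<eta> k"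
    and sum_zero: "(\<Sum>k\<le>M. \<delta> k) = 0"
    and "(\<Sum>k<M. \<eta> k) \<le> B"
  shows "\<bar>\<delta> 0\<bar> \<le> B / (1 - q)" and "\<bar>\<delta> M\<bar> \<le> B * (1 / (1 - q) + 1)"
proof -
  have "\<bar>\<delta> 0\<bar> \<le> (\<Sum>k<M. \<eta> k) / (1 - q)"
    by (rule contracting_recurrence_zero_sum_head_abs_le[OF \<open>q < 1\<close> \<rho> \<eta> step sum_zero])
  also have "\<dots> \<le> B / (1 - q)"
    using \<open>q < 1\<close> \<open>(\<Sum>k<M. \<eta> k) \<le> B\<close> by (intro divide_right_mono) auto
  finally show "\<bar>\<delta> 0\<bar> \<le> B / (1 - q)" .
  moreover have "\<bar>\<delta> M\<bar> \<le> \<bar>\<delta> 0\<bar> + (\<Sum>k<M. \<eta> k)"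
    using \<rho> \<open>q < 1\<close> step
    by (intro contracting_recurrence_abs_le[where M = M and \<rho> = \<rho>]) fastforce+
  ultimately show "\<bar>\<delta> M\<bar> \<le> B * (1 / (1 - q) + 1)"
    using \<open>(\<Sum>k<M. \<eta> k) \<le> B\<close> by (simp add: ring_distribs)
qed

text \<open>The coefficient \<open>q m (d + j) / (j (d + m))\<close> differs from \<open>q\<close> by
  \<open>O(d (m + j) / (m j))\<close>: this is the price of replacing the ratio of the inclusion rates
  by the ratio \<open>q\<close> of the walk rates.\<close>
lemma gradient_deviation_step:
  fixes q d K m j D D' t :: real
  assumes "0 \<le> q" "q \<le> 1" "0 \<le> d" "1 \<le> m" "1 \<le> j" "\<bar>t\<bar> \<le> 1"
    and rec: "\<bar>j * (d + m) * D' - q * m * (d + j) * D\<bar> \<le> K * (m + j) * d"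
  shows "\<bar>(D' - q * t) - q * m * (d + j) / (j * (d + m)) * (D - t)\<bar> \<le> (K + 1) * (m + j) * d / (m * j)"
proof -
  define a where "a = j * (d + m)"
  define b where "b = q * m * (d + j)"
  have "0 < m * j"
    using assms by simp
  have "m * j \<le> a"
    unfolding a_def using assms by (simp add: algebra_simps)
  have "b - q * a = q * d * (m - j)"
    unfolding a_def b_def by (simp add: algebra_simps)
  then have "\<bar>b - q * a\<bar> = q * d * \<bar>m - j\<bar>"
    using assms by (simp add: abs_mult)
  also have "\<dots> \<le> 1 * d * (m + j)"
    using assms by (intro mult_mono) auto
  finally have "\<bar>b - q * a\<bar> \<le> 1 * d * (m + j)" .
  moreover have "\<bar>(b - q * a) * t\<bar> \<le> \<bar>b - q * a\<bar>"
    unfolding abs_mult using \<open>\<bar>t\<bar> \<le> 1\<close> by (simp add: mult_left_le)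
  ultimately have "\<bar>(b - q * a) * t\<bar> \<le> (m + j) * d"
    by (simp add: mult.commute)
  then have "\<bar>a * D' - b * D + (b - q * a) * t\<bar> \<le> (K + 1) * (m + j) * d"
    using rec unfolding a_def b_def by (simp add: distrib_right)
  moreover have "(D' - q * t) - b / a * (D - t) = (a * D' - b * D + (b - q * a) * t) / a"
    using \<open>0 < m * j\<close> \<open>m * j \<le> a\<close> by (simp add: field_simps)
  ultimately have "\<bar>(D' - q * t) - b / a * (D - t)\<bar> \<le> (K + 1) * (m + j) * d / a"
    using \<open>0 < m * j\<close> \<open>m * j \<le> a\<close> by (simp add: divide_right_mono)
  also have "\<dots> \<le> (K + 1) * (m + j) * d / (m * j)"
  proof (rule divide_left_mono)
    have "0 \<le> K * (m + j) * d"
      using rec abs_ge_zero order_trans by blast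
    then show "0 \<le> (K + 1) * (m + j) * d"
      using assms by (simp add: distrib_right)
  qed (use \<open>0 < m * j\<close> \<open>m * j \<le> a\<close> in auto)
  finally show ?thesis
    unfolding a_def b_def .
qed

lemma gradient_ratio_le:
  fixes q d m j :: real
  assumes "0 \<le> q" "0 \<le> d" "1 \<le> m" "1 \<le> j"
  shows "q * m * (d + j) / (j * (d + m)) \<le> q * (1 + d)"
proof -
  have "(1 + d) * (j * (d + m)) - m * (d + j) = j * d + d * d * j + d * m * (j - 1)"
    by (simp add: algebra_simps)
  moreover have "0 \<le> j * d + d * d * j + d * m * (j - 1)"
    using assms by simp
  ultimately have "m * (d + j) \<le> (1 + d) * (j * (d + m))"
    by linarith
  then have "q * (m * (d + j)) \<le> q * ((1 + d) * (j * (d + m)))"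
    using assms by (intro mult_left_mono)
  moreover have "0 < j * (d + m)"
    using assms by simp
  ultimately show ?thesis
    by (simp add: pos_divide_le_eq mult.assoc mult.left_commute)
qed

lemma sum_inverse_complementary_products_le:
  assumes "3 \<le> N"
  shows "(\<Sum>k<N - 1. real N / (real (Suc k) * real (N - Suc k))) \<le> 4 * ln (real N)"
proof -
  have "real N / (real (Suc k) * real (N - Suc k)) = 1 / real (Suc k) + 1 / real (N - Suc k)"
    if "k < N - 1" for k
  proof -
    have "real N = real (Suc k) + real (N - Suc k)" "0 < real (N - Suc k)"
      using that by auto
    then show ?thesis
      by (simp add: field_simps)
  qed
  then have "(\<Sum>k<N - 1. real N / (real (Suc k) * real (N - Suc k)))
      = (\<Sum>k<N - 1. 1 / real (Suc k)) + (\<Sum>k<N - 1. 1 / real (N - Suc k))"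
    by (simp add: sum.distrib[symmetric])
  also have "(\<Sum>k<N - 1. 1 / real (N - Suc k)) = (\<Sum>k<N - 1. 1 / real (Suc (N - 1 - Suc k)))"
    by (intro sum.cong) auto
  also have "\<dots> = (\<Sum>k<N - 1. 1 / real (Suc k))"
    by (rule sum.nat_diff_reindex)
  also have "(\<Sum>k<N - 1. 1 / real (Suc k)) = harm (N - 1)"
    by (simp add: harm_altdef divide_inverse)
  finally have "(\<Sum>k<N - 1. real N / (real (Suc k) * real (N - Suc k))) = 2 * harm (N - 1)"
    by simp
  moreover have "harm (N - 1) - ln (real (N - 1)) \<le> harm 1 - ln (real 1)"
    using assms by (intro euler_mascheroni_sequence_decreasing) auto
  then have "harm (N - 1) \<le> 1 + ln (real (N - 1))"
    by (simp add: harm_expand)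
  moreover have "ln (real (N - 1)) \<le> ln (real N)"
    using assms by simp
  moreover have "1 \<le> ln (real N)"
    using exp_le assms by (simp add: ln_ge_iff)
  ultimately show ?thesis
    by linarith
qed

lemma walk_deviation_gradient_step:
  fixes h :: "nat \<Rightarrow> real"
  assumes "0 \<le> q" "q < 1" "0 \<le> d" "Suc k < N" "\<bar>h N - h 0\<bar> \<le> 1"
    and rec: "\<bar>real (N - Suc k) * (d + real (Suc k)) * (h (Suc (Suc k)) - h (Suc k))
               - q * real (Suc k) * (d + real (N - Suc k)) * (h (Suc k) - h k)\<bar> \<le> K * real N * d"
  defines "e \<equiv> \<lambda>j. h j - walk_harmonic q N (h 0) (h N) j"
  shows "\<bar>(e (Suc (Suc k)) - e (Suc k))
            - q * real (Suc k) * (d + real (N - Suc k)) / (real (N - Suc k) * (d + real (Suc k)))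
              * (e (Suc k) - e k)\<bar>
         \<le> (K + 1) * d * (real N / (real (Suc k) * real (N - Suc k)))"
proof -
  define g where "g i = walk_harmonic q N (h 0) (h N) (Suc i) - walk_harmonic q N (h 0) (h N) i" for i
  have "q ^ N \<noteq> 1"
    using assms by (simp add: power_less_one_iff less_imp_neq)
  then have "g (Suc k) = q * g k"
    unfolding g_def walk_harmonic_gradient[OF \<open>q ^ N \<noteq> 1\<close>] by simp
  moreover have "\<bar>g k\<bar> \<le> 1"
    unfolding g_def using assms by (intro walk_harmonic_gradient_abs_le) auto
  moreover have "e (Suc i) - e i = (h (Suc i) - h i) - g i" for i
    unfolding e_def g_def by simp
  moreover have "real N = real (Suc k) + real (N - Suc k)"
    using assms by simp
  ultimately show ?thesis
    using gradient_deviation_step[OF \<open>0 \<le> q\<close> _ \<open>0 \<le> d\<close> _ _ \<open>\<bar>g k\<bar> \<le> 1\<close>,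
        where m = "real (Suc k)" and j = "real (N - Suc k)" and K = K
          and D = "h (Suc k) - h k" and D' = "h (Suc (Suc k)) - h (Suc k)"] rec assms(2,4)
    by (simp add: ac_simps)
qed

lemma walk_harmonic_deviation_le:
  fixes h :: "nat \<Rightarrow> real"
  assumes "0 \<le> q" "q < 1" "0 \<le> d" "q * (1 + d) \<le> q'" "q' < 1" "3 \<le> N" "0 \<le> K"
    and "\<bar>h N - h 0\<bar> \<le> 1"
    and rec: "\<And>i. 1 \<le> i \<Longrightarrow> i < N \<Longrightarrow>
      \<bar>real (N - i) * (d + real i) * (h (Suc i) - h i)
        - q * real i * (d + real (N - i)) * (h i - h (i - 1))\<bar> \<le> K * real N * d"
  shows "\<bar>h 1 - walk_harmonic q N (h 0) (h N) 1\<bar> \<le> 4 * (K + 1) * d * ln (real N) / (1 - q')"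
    and "\<bar>h (N - 1) - walk_harmonic q N (h 0) (h N) (N - 1)\<bar>
           \<le> 4 * (K + 1) * d * ln (real N) * (1 / (1 - q') + 1)"
proof -
  define e where "e j = h j - walk_harmonic q N (h 0) (h N) j" for j
  define \<delta> where "\<delta> k = e (Suc k) - e k" for k
  define \<rho> where "\<rho> k = q * real (Suc k) * (d + real (N - Suc k)) / (real (N - Suc k) * (d + real (Suc k)))" for k
  define \<eta> where "\<eta> k = (K + 1) * d * (real N / (real (Suc k) * real (N - Suc k)))" for k
  define M where "M = N - 1"
  have "N = Suc M"
    unfolding M_def using assms by simp
  have "q ^ N \<noteq> 1"
    using assms by (simp add: power_less_one_iff less_imp_neq)
  then have "e 0 = 0" "e N = 0"
    unfolding e_def by (simp_all add: walk_harmonic_eq)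
  have sum_zero: "(\<Sum>k\<le>M. \<delta> k) = 0"
    unfolding \<delta>_def lessThan_Suc_atMost[symmetric] sum_lessThan_telescope \<open>N = Suc M\<close>[symmetric]
    using \<open>e 0 = 0\<close> \<open>e N = 0\<close> by simp
  have step: "\<bar>\<delta> (Suc k) - \<rho> k * \<delta> k\<bar> \<le> \<eta> k" if "k < M" for k
    unfolding \<delta>_def \<rho>_def \<eta>_def e_def
    using that assms rec[of "Suc k"] \<open>N = Suc M\<close> by (intro walk_deviation_gradient_step) auto
  have \<rho>: "0 \<le> \<rho> k \<and> \<rho> k \<le> q'" if "k < M" for k
    using gradient_ratio_le[OF \<open>0 \<le> q\<close> \<open>0 \<le> d\<close>, of "real (Suc k)" "real (N - Suc k)"] that assms
      \<open>N = Suc M\<close> unfolding \<rho>_def by simp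
  have \<eta>: "0 \<le> \<eta> k" for k
    unfolding \<eta>_def using assms by simp
  have "(\<Sum>k<M. \<eta> k) = (K + 1) * d * (\<Sum>k<N - 1. real N / (real (Suc k) * real (N - Suc k)))"
    unfolding \<eta>_def M_def sum_distrib_left ..
  also have "\<dots> \<le> (K + 1) * d * (4 * ln (real N))"
    using sum_inverse_complementary_products_le[OF \<open>3 \<le> N\<close>] assms by (intro mult_left_mono) auto
  finally have "(\<Sum>k<M. \<eta> k) \<le> 4 * (K + 1) * d * ln (real N)"
    by (simp add: ac_simps)
  note ends = contracting_recurrence_zero_sum_ends_le[OF \<open>q' < 1\<close> \<rho> \<eta> step sum_zero this]
  have "h 1 - walk_harmonic q N (h 0) (h N) 1 = \<delta> 0"
    "h (N - 1) - walk_harmonic q N (h 0) (h N) (N - 1) = - \<delta> M"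
    unfolding \<delta>_def e_def[symmetric] using \<open>e 0 = 0\<close> \<open>e N = 0\<close> \<open>N = Suc M\<close> by simp_all
  with ends show "\<bar>h 1 - walk_harmonic q N (h 0) (h N) 1\<bar> \<le> 4 * (K + 1) * d * ln (real N) / (1 - q')"
    and "\<bar>h (N - 1) - walk_harmonic q N (h 0) (h N) (N - 1)\<bar>
           \<le> 4 * (K + 1) * d * ln (real N) * (1 / (1 - q') + 1)"
    by simp_all
qed

context inclusion_hitting
begin

lemma hit_prob_zeta_walk_deviation_le:
  assumes "x \<noteq> y" "0 < r y x" "r y x < r x y" "3 \<le> N" "r y x / r x y * (1 + dN) \<le> q'" "q' < 1"
  defines "C \<equiv> 4 * ((\<Sum>u\<in>UNIV. \<Sum>v\<in>UNIV. r u v) / r x y + 1) * (1 / (1 - q') + 1)"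
  shows "\<bar>hit_prob dN r A w (zeta N x y 1) - walk_harmonic (r y x / r x y) N
            (hit_prob dN r A w (conc N x)) (hit_prob dN r A w (conc N y)) 1\<bar> \<le> C * (dN * ln (real N))"
    and "\<bar>hit_prob dN r A w (zeta N x y (N - 1)) - walk_harmonic (r y x / r x y) N
            (hit_prob dN r A w (conc N x)) (hit_prob dN r A w (conc N y)) (N - 1)\<bar> \<le> C * (dN * ln (real N))"
proof -
  define q where "q = r y x / r x y"
  define K where "K = (\<Sum>u\<in>UNIV. \<Sum>v\<in>UNIV. r u v) / r x y"
  define h where "h j = hit_prob dN r A w (zeta N x y j)" for j
  have "0 < r x y"
    using assms by linarith
  then have "0 \<le> q" "q < 1"
    unfolding q_def using assms by simp_all
  have "0 \<le> K"
    unfolding K_def using r_nonneg \<open>0 < r x y\<close> by (simp add: sum_nonneg)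
  have "\<bar>h N - h 0\<bar> \<le> 1"
    using hit_prob_bounds[of "zeta N x y N"] hit_prob_bounds[of "zeta N x y 0"] unfolding h_def by linarith
  have rec: "\<bar>real (N - i) * (dN + real i) * (h (Suc i) - h i)
        - q * real i * (dN + real (N - i)) * (h i - h (i - 1))\<bar> \<le> K * real N * dN"
    if "1 \<le> i" "i < N" for i
    unfolding h_def q_def K_def by (rule hit_prob_zeta_gradient_recurrence[OF \<open>x \<noteq> y\<close> \<open>0 < r x y\<close> that])
  define B where "B = 4 * (K + 1) * dN * ln (real N)"
  have "C * (dN * ln (real N)) = B * (1 / (1 - q') + 1)"
    unfolding C_def B_def K_def by (simp add: ac_simps)
  moreover have "0 \<le> B"
    unfolding B_def using \<open>0 \<le> K\<close> dN_pos \<open>3 \<le> N\<close> by simp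
  then have "B / (1 - q') \<le> B * (1 / (1 - q') + 1)"
    by (simp add: ring_distribs)
  moreover have "h 0 = hit_prob dN r A w (conc N x)" "h N = hit_prob dN r A w (conc N y)"
    unfolding h_def using \<open>x \<noteq> y\<close> by (simp_all add: zeta_0 zeta_self)
  ultimately show "\<bar>hit_prob dN r A w (zeta N x y 1) - walk_harmonic (r y x / r x y) N
            (hit_prob dN r A w (conc N x)) (hit_prob dN r A w (conc N y)) 1\<bar> \<le> C * (dN * ln (real N))"
    and "\<bar>hit_prob dN r A w (zeta N x y (N - 1)) - walk_harmonic (r y x / r x y) N
            (hit_prob dN r A w (conc N x)) (hit_prob dN r A w (conc N y)) (N - 1)\<bar> \<le> C * (dN * ln (real N))"
    using walk_harmonic_deviation_le[OF \<open>0 \<le> q\<close> \<open>q < 1\<close> _ _ \<open>q' < 1\<close> \<open>3 \<le> N\<close> \<open>0 \<le> K\<close>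
        \<open>\<bar>h N - h 0\<bar> \<le> 1\<close> rec] dN_pos assms(5)
    unfolding q_def[symmetric] h_def[symmetric] B_def[symmetric] by auto
qed

end

theorem lemma4p8:
  fixes r :: "'a::finite \<Rightarrow> 'a \<Rightarrow> real" and d :: "nat \<Rightarrow> real"
    and A :: "'a set" and w x y :: 'a
  assumes r_nonneg: "\<forall>a b. 0 \<le> r a b"
    and r_diag: "\<forall>a. r a a = 0"
    and irred: "\<forall>a b. (a, b) \<in> {(u, v). 0 < r u v}\<^sup>*"
    and d_pos: "\<forall>N. 0 < d N"
    and d_lim: "d \<longlonglongrightarrow> 0"
    and A_ne: "A \<noteq> {}" and wA: "w \<in> A"
    and xy: "x \<noteq> y" and rates: "r x y > r y x" "r y x > 0"
  shows "(\<lambda>N. let q = r y x / r x y in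
            \<bar>hit_prob (d N) r A w (zeta N x y 1)
             - (q - q ^ N) / (1 - q ^ N) * hit_prob (d N) r A w (conc N x)
             - (1 - q) / (1 - q ^ N) * hit_prob (d N) r A w (conc N y)\<bar>)
          \<in> O(\<lambda>N. d N * ln (real N))
       \<and> (\<lambda>N. let q = r y x / r x y in
            \<bar>hit_prob (d N) r A w (zeta N x y (N - 1))
             - (q ^ (N - 1) - q ^ N) / (1 - q ^ N) * hit_prob (d N) r A w (conc N x)
             - (1 - q ^ (N - 1)) / (1 - q ^ N) * hit_prob (d N) r A w (conc N y)\<bar>)
          \<in> O(\<lambda>N. d N * ln (real N))"
proof -
  define q where "q = r y x / r x y"
  define q' where "q' = (1 + q) / 2"
  define C where "C = 4 * ((\<Sum>u\<in>UNIV. \<Sum>v\<in>UNIV. r u v) / r x y + 1) * (1 / (1 - q') + 1)"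
  define P where "P N = hit_prob (d N) r A w" for N
  have "0 < q" "q < 1" "q' < 1"
    unfolding q_def q'_def using rates by simp_all
  have "eventually (\<lambda>N. d N < (1 - q) / (2 * q)) sequentially"
    using d_lim \<open>0 < q\<close> \<open>q < 1\<close> by (intro order_tendstoD(2)) auto
  then have "eventually (\<lambda>N.
      \<bar>P N (zeta N x y 1) - walk_harmonic q N (P N (conc N x)) (P N (conc N y)) 1\<bar>
        \<le> C * norm (d N * ln (real N)) \<and>
      \<bar>P N (zeta N x y (N - 1)) - walk_harmonic q N (P N (conc N x)) (P N (conc N y)) (N - 1)\<bar>
        \<le> C * norm (d N * ln (real N))) sequentially"
    using eventually_ge_at_top[of 3]
  proof eventually_elim
    case (elim N)
    interpret inclusion_hitting "d N" r A w
      using d_pos r_nonneg wA by unfold_locales auto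
    have "q * (1 + d N) \<le> q'"
      using elim \<open>0 < q\<close> by (simp add: q'_def field_simps)
    moreover have "norm (d N * ln (real N)) = d N * ln (real N)"
      using d_pos \<open>3 \<le> N\<close> by (simp add: less_imp_le)
    ultimately show ?case
      using hit_prob_zeta_walk_deviation_le[OF xy rates(2,1) \<open>3 \<le> N\<close> _ \<open>q' < 1\<close>]
      unfolding C_def P_def q_def by simp
  qed
  then show ?thesis
    unfolding Let_def q_def[symmetric] P_def walk_harmonic_def diff_diff_eq power_one_right
    by (intro conjI bigoI[where c = C]; elim eventually_mono) auto
qed

end
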